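(* Let $m\in\mathbb N$. Let $\mathbf X=(X_1,\dots,X_n)$ be (possibly dependent) component lifetimes and $\mathbf Y_i=(Y_{i1},\dots,Y_{in})$, $i=1,\dots,m$, be vectors of spare lifetimes, all $X_j$ and $Y_{ij}$ identically distributed as $X$. Let $T_C=\tau(\mathbf Z)$, where $Z_j=\max\{X_j,Y_{1j},\dots,Y_{mj}\}$ with $X_j,Y_{1j},\dots,Y_{mj}$ independent, and $T_S=\max\{\tau(\mathbf X),\tau(\mathbf Y_1),\dots,\tau(\mathbf Y_m)\}$ with $\tau(\mathbf X),\tau(\mathbf Y_1),\dots,\tau(\mathbf Y_m)$ independent, where $\tau$ is a coherent structure and $\tau(\mathbf X),\tau(\mathbf Y_i),\tau(\mathbf Z)$ all have the same domination function $h$; thus $\bar F_{T_C}(x)=h\big(1-(1-\bar F_X(x))^{m+1}\big)$ and $F_{T_S}(x)=\big(1-h(\bar F_X(x))\big)^{m+1}$. Let $R(p)=(1-p)h'(p)/(1-h(p))$, $p\in(0,1)$. Then $T_S\underset{b}{\prec}T_C$ holds if and only if $R(p)/R\big(1-(1-p)^{m+1}\big)$ is increasing in $p\in(0,1)$.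
   Context: All random variables are non-negative and absolutely continuous with support $[0,\infty)$. For a random variable $W$: density $f_W$, cdf $F_W$, survival $\bar F_W=1-F_W$, reversed hazard rate $\tilde r_W=f_W/F_W$. $U\underset{b}{\prec}V$ means $\tilde r_U(x)/\tilde r_V(x)$ is decreasing in $x\ge0$. The domination function $h:[0,1]\to[0,1]$ of a coherent system whose components have common marginal survival function $\bar G$ is the function (depending on structure and survival copula) with system reliability $h(\bar G(x))$; it is increasing, continuous, $h(0)=0$, $h(1)=1$, assumed differentiable. "Increasing" means non-decreasing, "decreasing" means non-increasing. *)

theory Defs
  imports "HOL-Analysis.Analysis"
begin

definition rev_hazard :: "(real \<Rightarrow> real) \<Rightarrow> real \<Rightarrow> real" where
  "rev_hazard G x = deriv G x / G x"

definition rhr_ratio_order :: "(real \<Rightarrow> real) \<Rightarrow> (real \<Rightarrow> real) \<Rightarrow> bool" where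
  "rhr_ratio_order U V \<longleftrightarrow>
     (\<forall>x y. 0 < x \<longrightarrow> x \<le> y \<longrightarrow>
        rev_hazard U y / rev_hazard V y \<le> rev_hazard U x / rev_hazard V x)"

definition cdf_TC :: "(real \<Rightarrow> real) \<Rightarrow> (real \<Rightarrow> real) \<Rightarrow> nat \<Rightarrow> real \<Rightarrow> real" where
  "cdf_TC F h m x = 1 - h (1 - (1 - (1 - F x)) ^ Suc m)"

definition cdf_TS :: "(real \<Rightarrow> real) \<Rightarrow> (real \<Rightarrow> real) \<Rightarrow> nat \<Rightarrow> real \<Rightarrow> real" where
  "cdf_TS F h m x = (1 - h (1 - F x)) ^ Suc m"

definition Rfun :: "(real \<Rightarrow> real) \<Rightarrow> real \<Rightarrow> real" where
  "Rfun h p = (1 - p) * deriv h p / (1 - h p)"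

end

theory Submission
  imports Defs
begin

text \<open>Write p = 1 - F x for the survival probability of a component. By the chain rule
  both reversed hazard rates are (m + 1) f(x) / F(x) times a value of R: R(p) for T_S and
  R(1 - (1 - p)^(m+1)) for T_C. Their ratio is therefore R(p) / R(1 - (1 - p)^(m+1)) at
  p = 1 - F x, and since x \<mapsto> 1 - F x maps (0, \<infinity>) onto (0, 1) decreasingly, the ratio
  decreases in x exactly when this function increases in p.\<close>

lemma antimono_comp_iff_mono_on:
  fixes \<phi> :: "'a::linorder \<Rightarrow> 'b::linorder" and g :: "'b \<Rightarrow> 'c::order"
  assumes \<phi>_antimono: "\<And>x y. x \<in> A \<Longrightarrow> y \<in> A \<Longrightarrow> x \<le> y \<Longrightarrow> \<phi> y \<le> \<phi> x"
    and \<phi>_image: "\<phi> ` A = B"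
  shows "(\<forall>x\<in>A. \<forall>y\<in>A. x \<le> y \<longrightarrow> g (\<phi> y) \<le> g (\<phi> x)) \<longleftrightarrow> mono_on B g"
proof
  assume anti: "\<forall>x\<in>A. \<forall>y\<in>A. x \<le> y \<longrightarrow> g (\<phi> y) \<le> g (\<phi> x)"
  show "mono_on B g"
  proof (rule mono_onI)
    fix a b assume "a \<in> B" "b \<in> B" "a \<le> b"
    then obtain x y where xy: "x \<in> A" "y \<in> A" "\<phi> x = b" "\<phi> y = a"
      using \<phi>_image by blast
    show "g a \<le> g b"
    proof (cases "x \<le> y")
      case True
      then show ?thesis using anti xy by blast
    next
      case False
      then have "a = b" using \<phi>_antimono[of y x] xy \<open>a \<le> b\<close> by auto
      then show ?thesis by simp
    qed
  qed
next
  assume "mono_on B g"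
  then show "\<forall>x\<in>A. \<forall>y\<in>A. x \<le> y \<longrightarrow> g (\<phi> y) \<le> g (\<phi> x)"
    using \<phi>_antimono \<phi>_image by (auto intro: mono_onD)
qed

lemma cdf_le_one:
  fixes F :: "real \<Rightarrow> real"
  assumes "mono F" and "(F \<longlongrightarrow> 1) at_top"
  shows "F x \<le> 1"
proof -
  have "eventually (\<lambda>y. F x \<le> F y) at_top"
    using eventually_ge_at_top[of x] by eventually_elim (use assms(1) in \<open>simp add: mono_def\<close>)
  then show ?thesis
    using tendsto_le[OF _ assms(2) tendsto_const] by simp
qed

lemma survival_image_pos_reals:
  fixes F f :: "real \<Rightarrow> real"
  assumes F_zero: "\<forall>x\<le>0. F x = 0"
    and F_mono: "mono F"
    and F_cont: "continuous_on UNIV F"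
    and F_lim: "(F \<longlongrightarrow> 1) at_top"
    and F_dens: "\<forall>x>0. (F has_real_derivative f x) (at x)"
    and f_pos: "\<forall>x>0. f x > 0"
  shows "(\<lambda>x. 1 - F x) ` {0<..} = {0<..<1}"
proof -
  have F_strict: "F x < F y" if "0 < x" "x < y" for x y
    using that F_dens f_pos
    by (intro DERIV_pos_imp_increasing[OF that(2)]) (metis less_le_trans)
  have F_bounds: "0 < F x \<and> F x < 1" if "0 < x" for x
  proof
    have "F 0 \<le> F (x/2)" using F_mono that by (simp add: mono_def)
    then show "0 < F x" using F_strict[of "x/2" x] F_zero that by simp
    show "F x < 1" using F_strict[of x "x+1"] cdf_le_one[OF F_mono F_lim, of "x+1"] that by simp
  qed
  have survival_onto: "a \<in> (\<lambda>x. 1 - F x) ` {0<..}" if a: "0 < a" "a < 1" for a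
  proof -
    obtain b where b: "\<And>y. y \<ge> b \<Longrightarrow> F y > 1 - a"
      using order_tendstoD(1)[OF F_lim, of "1 - a"] a
      unfolding eventually_at_top_linorder by auto
    have "F (max b 0) > 1 - a" using b by simp
    then obtain x where x: "0 \<le> x" "F x = 1 - a"
      using IVT[of F 0 "1 - a" "max b 0"] F_zero a F_cont
      by (auto simp: continuous_on_eq_continuous_at)
    moreover have "x \<noteq> 0" using x F_zero a by auto
    ultimately show ?thesis by (intro rev_image_eqI[of x]) auto
  qed
  show ?thesis
    using F_bounds survival_onto by fastforce
qed

lemma has_real_derivative_cdf_TS:
  fixes F h :: "real \<Rightarrow> real" and D :: real
  assumes "(F has_real_derivative D) (at x)" and "h differentiable (at (1 - F x))"
  shows "(cdf_TS F h m has_real_derivative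
           Suc m * (1 - h (1 - F x)) ^ m * deriv h (1 - F x) * D) (at x)"
proof -
  have "(h has_real_derivative deriv h (1 - F x)) (at (1 - F x))"
    using assms(2) DERIV_deriv_iff_real_differentiable by blast
  moreover have "((\<lambda>x. 1 - F x) has_real_derivative - D) (at x)"
    using assms(1) by (auto intro!: derivative_eq_intros)
  ultimately have "((\<lambda>x. h (1 - F x)) has_real_derivative deriv h (1 - F x) * - D) (at x)"
    by (rule DERIV_chain2)
  then show ?thesis
    unfolding cdf_TS_def by (auto intro!: derivative_eq_intros simp del: power_Suc)
qed

lemma has_real_derivative_cdf_TC:
  fixes F h :: "real \<Rightarrow> real" and D :: real
  assumes "(F has_real_derivative D) (at x)" and "h differentiable (at (1 - F x ^ Suc m))"
  shows "(cdf_TC F h m has_real_derivative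
           deriv h (1 - F x ^ Suc m) * (Suc m * F x ^ m * D)) (at x)"
proof -
  have "(h has_real_derivative deriv h (1 - F x ^ Suc m)) (at (1 - F x ^ Suc m))"
    using assms(2) DERIV_deriv_iff_real_differentiable by blast
  moreover have "((\<lambda>x. 1 - F x ^ Suc m) has_real_derivative - (Suc m * F x ^ m * D)) (at x)"
    using assms(1) by (auto intro!: derivative_eq_intros simp del: power_Suc)
  ultimately have "((\<lambda>x. h (1 - F x ^ Suc m)) has_real_derivative
          deriv h (1 - F x ^ Suc m) * - (Suc m * F x ^ m * D)) (at x)"
    by (rule DERIV_chain2)
  then show ?thesis
    unfolding cdf_TC_def by (auto intro!: derivative_eq_intros simp del: power_Suc)
qed

lemma rev_hazard_cdf_TS:
  fixes F h :: "real \<Rightarrow> real" and D :: real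
  assumes "(F has_real_derivative D) (at x)" and "h differentiable (at (1 - F x))"
    and "F x \<noteq> 0" and "h (1 - F x) \<noteq> 1"
  shows "rev_hazard (cdf_TS F h m) x = Suc m * D * Rfun h (1 - F x) / F x"
proof -
  define A where "A = 1 - h (1 - F x)"
  have "A \<noteq> 0" using assms(4) by (simp add: A_def)
  have "rev_hazard (cdf_TS F h m) x = Suc m * A ^ m * deriv h (1 - F x) * D / (A * A ^ m)"
    unfolding rev_hazard_def DERIV_imp_deriv[OF has_real_derivative_cdf_TS[of F D x h m, OF assms(1,2)]]
    by (simp add: cdf_TS_def A_def)
  also have "\<dots> = Suc m * D * Rfun h (1 - F x) / F x"
    using \<open>A \<noteq> 0\<close> assms(3) by (simp add: Rfun_def A_def[symmetric] field_simps)
  finally show ?thesis .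
qed

lemma rev_hazard_cdf_TC:
  fixes F h :: "real \<Rightarrow> real" and D :: real
  assumes "(F has_real_derivative D) (at x)" and "h differentiable (at (1 - F x ^ Suc m))"
    and "F x \<noteq> 0" and "h (1 - F x ^ Suc m) \<noteq> 1"
  shows "rev_hazard (cdf_TC F h m) x = Suc m * D * Rfun h (1 - F x ^ Suc m) / F x"
proof -
  define B where "B = 1 - h (1 - F x ^ Suc m)"
  have "B \<noteq> 0" using assms(4) by (simp add: B_def)
  have "rev_hazard (cdf_TC F h m) x = deriv h (1 - F x ^ Suc m) * (Suc m * F x ^ m * D) / B"
    unfolding rev_hazard_def DERIV_imp_deriv[OF has_real_derivative_cdf_TC[of F D x h m, OF assms(1,2)]]
    by (simp add: cdf_TC_def B_def del: power_Suc)
  also have "\<dots> = Suc m * D * Rfun h (1 - F x ^ Suc m) / F x"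
    using \<open>B \<noteq> 0\<close> assms(3)
    by (simp add: Rfun_def B_def[symmetric] field_simps del: power_Suc) simp
  finally show ?thesis .
qed

lemma rev_hazard_ratio_cdf_TS_cdf_TC:
  fixes F h :: "real \<Rightarrow> real" and D :: real
  assumes dF: "(F has_real_derivative D) (at x)" and "D \<noteq> 0" and Fx: "0 < F x" "F x < 1"
    and h_diff: "\<forall>p\<in>{0<..<1}. h differentiable (at p)" and h_lt1: "\<forall>p\<in>{0<..<1}. h p < 1"
  shows "rev_hazard (cdf_TS F h m) x / rev_hazard (cdf_TC F h m) x =
         Rfun h (1 - F x) / Rfun h (1 - F x ^ Suc m)"
proof -
  have p: "1 - F x \<in> {0<..<1}" using Fx by simp
  have q: "1 - F x ^ Suc m \<in> {0<..<1}"
    using Fx by (simp add: power_less_one_iff del: power_Suc)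
  have "rev_hazard (cdf_TS F h m) x = Suc m * D * Rfun h (1 - F x) / F x"
    by (rule rev_hazard_cdf_TS[OF dF h_diff[rule_format, OF p] _
          less_imp_neq[OF h_lt1[rule_format, OF p]]]) (use Fx in simp)
  moreover have "rev_hazard (cdf_TC F h m) x = Suc m * D * Rfun h (1 - F x ^ Suc m) / F x"
    by (rule rev_hazard_cdf_TC[OF dF h_diff[rule_format, OF q] _
          less_imp_neq[OF h_lt1[rule_format, OF q]]]) (use Fx in simp)
  ultimately show ?thesis
    using Fx \<open>D \<noteq> 0\<close> by (simp del: power_Suc)
qed

theorem theorem4p2:
  fixes F f h :: "real \<Rightarrow> real" and m :: nat
  assumes F_zero: "\<forall>x\<le>0. F x = 0"
    and F_mono: "mono F"
    and F_cont: "continuous_on UNIV F"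
    and F_lim: "(F \<longlongrightarrow> 1) at_top"
    and F_dens: "\<forall>x>0. (F has_real_derivative f x) (at x)"
    and f_pos: "\<forall>x>0. f x > 0"
    and h0: "h 0 = 0" and h1: "h 1 = 1"
    and h_mono: "mono_on {0..1} h"
    and h_cont: "continuous_on {0..1} h"
    and h_range: "\<forall>p\<in>{0..1}. h p \<in> {0..1}"
    and h_diff: "\<forall>p\<in>{0<..<1}. h differentiable (at p)"
    and h_lt1: "\<forall>p\<in>{0<..<1}. h p < 1"
  shows "rhr_ratio_order (cdf_TS F h m) (cdf_TC F h m) \<longleftrightarrow>
         mono_on {0<..<1} (\<lambda>p. Rfun h p / Rfun h (1 - (1 - p) ^ Suc m))"
proof -
  define G where "G p = Rfun h p / Rfun h (1 - (1 - p) ^ Suc m)" for p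
  have image: "(\<lambda>x. 1 - F x) ` {0<..} = {0<..<1}"
    using survival_image_pos_reals[OF F_zero F_mono F_cont F_lim F_dens f_pos] .
  have ratio: "rev_hazard (cdf_TS F h m) x / rev_hazard (cdf_TC F h m) x = G (1 - F x)"
    if "0 < x" for x
  proof -
    have "1 - F x \<in> {0<..<1}" using image that by blast
    moreover have "f x \<noteq> 0" using f_pos that by auto
    ultimately show ?thesis
      using rev_hazard_ratio_cdf_TS_cdf_TC[of F "f x" x h m] F_dens h_diff h_lt1 that
      by (simp add: G_def)
  qed
  have "rhr_ratio_order (cdf_TS F h m) (cdf_TC F h m) \<longleftrightarrow>
        (\<forall>x\<in>{0<..}. \<forall>y\<in>{0<..}. x \<le> y \<longrightarrow> G (1 - F y) \<le> G (1 - F x))"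
    unfolding rhr_ratio_order_def by (auto simp: ratio dest: order_less_le_trans)
  also have "\<dots> \<longleftrightarrow> mono_on {0<..<1} G"
    using image by (intro antimono_comp_iff_mono_on) (simp add: F_mono[THEN monoD])
  finally show ?thesis unfolding G_def .
qed

end
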